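(* Let $\beta$ be a basis set of monomials in $x_1,\dots,x_r$, let $c^{\mathbf d}_{\mathbf j}$ be an arbitrary arrow for $\beta$, and let $\mathbf x^{\mathbf b}$ be a minimal generator of $I_\beta$ with $\mathbf x^{\mathbf b}\mid\mathbf x^{\mathbf d}$. Then either $c^{\mathbf d}_{\mathbf j}\sim0$ or $c^{\mathbf d}_{\mathbf j}\sim c^{\mathbf b}_{\mathbf j_1}$ for some $\mathbf x^{\mathbf j_1}\in\beta$.
   Context: Monomials are identified with exponent vectors in $\mathbb Z_{\ge0}^r$. A basis set is a finite nonempty set $\beta$ of monomials closed under taking divisors; $I_\beta$ is the ideal generated by monomials not in $\beta$. An arrow $c^{\mathbf d}_{\mathbf j}$ for $\beta$ is a pair $(\mathbf d,\mathbf j)$ with tail $\mathbf x^{\mathbf d}\notin\beta$ and head $\mathbf x^{\mathbf j}\in\beta$. A translation step replaces $(\mathbf d,\mathbf j)$ by $(\mathbf d\pm e_i,\mathbf j\pm e_i)$ provided the result is again an arrow (nonnegative exponents, head in $\beta$, tail not in $\beta$); $\sim$ is the equivalence relation generated by steps. $c\sim0$ means $c$ is translation-equivalent to an arrow $(\mathbf d',\mathbf j')$ with, for some $i$, $j'_i=0$, $d'_i\ge1$ and $\mathbf x^{\mathbf d'-e_i}\notin\beta$. *)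

theory Defs
  imports Main
begin

text \<open>Monomials in variables indexed by a finite type 'i (r = CARD('i)) are
exponent vectors 'i \<Rightarrow> nat.\<close>

type_synonym 'i monomial = "'i \<Rightarrow> nat"

definition mdvd :: "'i monomial \<Rightarrow> 'i monomial \<Rightarrow> bool" where
  "mdvd a b \<longleftrightarrow> (\<forall>i. a i \<le> b i)"

definition basis_set :: "('i::finite) monomial set \<Rightarrow> bool" where
  "basis_set \<beta> \<longleftrightarrow> finite \<beta> \<and> \<beta> \<noteq> {} \<and> (\<forall>m\<in>\<beta>. \<forall>m'. mdvd m' m \<longrightarrow> m' \<in> \<beta>)"

definition in_I :: "'i monomial set \<Rightarrow> 'i monomial \<Rightarrow> bool" where
  "in_I \<beta> m \<longleftrightarrow> (\<exists>g. g \<notin> \<beta> \<and> mdvd g m)"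

definition min_gen :: "'i monomial set \<Rightarrow> 'i monomial \<Rightarrow> bool" where
  "min_gen \<beta> b \<longleftrightarrow> in_I \<beta> b \<and> (\<forall>m. in_I \<beta> m \<and> mdvd m b \<longrightarrow> m = b)"

definition is_arrow :: "'i monomial set \<Rightarrow> 'i monomial \<Rightarrow> 'i monomial \<Rightarrow> bool" where
  "is_arrow \<beta> d j \<longleftrightarrow> d \<notin> \<beta> \<and> j \<in> \<beta>"

definition tstep :: "'i monomial set \<Rightarrow> ('i monomial \<times> 'i monomial) \<Rightarrow> ('i monomial \<times> 'i monomial) \<Rightarrow> bool" where
  "tstep \<beta> c c' \<longleftrightarrow> is_arrow \<beta> (fst c) (snd c) \<and> is_arrow \<beta> (fst c') (snd c') \<and>
     (\<exists>i. (fst c' = (fst c)(i := fst c i + 1) \<and> snd c' = (snd c)(i := snd c i + 1))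
        \<or> (fst c i \<ge> 1 \<and> snd c i \<ge> 1 \<and>
           fst c' = (fst c)(i := fst c i - 1) \<and> snd c' = (snd c)(i := snd c i - 1)))"

definition tequiv :: "'i monomial set \<Rightarrow> ('i monomial \<times> 'i monomial) \<Rightarrow> ('i monomial \<times> 'i monomial) \<Rightarrow> bool" where
  "tequiv \<beta> = equivclp (tstep \<beta>)"

definition sim0 :: "'i monomial set \<Rightarrow> ('i monomial \<times> 'i monomial) \<Rightarrow> bool" where
  "sim0 \<beta> c \<longleftrightarrow> (\<exists>d' j' i. tequiv \<beta> c (d', j') \<and> is_arrow \<beta> d' j' \<and>
      j' i = 0 \<and> d' i \<ge> 1 \<and> (d'(i := d' i - 1)) \<notin> \<beta>)"

end

theory Submission
  imports Defs
begin

text \<open>Walk the arrow down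
  along a coordinate \<open>i\<close> with \<open>b i < d i\<close>: the new tail is still divisible by \<open>b\<close>,
  hence outside \<open>\<beta>\<close>. Either the head has \<open>j i = 0\<close>, which exhibits \<open>c \<sim> 0\<close>,
  or the step \<open>(d, j) \<mapsto> (d - e\<^sub>i, j - e\<^sub>i)\<close> is a translation and we continue;
  when no such coordinate is left, the tail is \<open>b\<close>.\<close>

lemma basis_set_notin_if_mdvd:
  assumes "basis_set \<beta>" "b \<notin> \<beta>" "mdvd b m"
  shows "m \<notin> \<beta>"
  using assms unfolding basis_set_def by blast

lemma min_gen_notin:
  assumes "basis_set \<beta>" "min_gen \<beta> b"
  shows "b \<notin> \<beta>"
  using assms basis_set_notin_if_mdvd unfolding min_gen_def in_I_def by blast

lemma tstep_lower:
  assumes "basis_set \<beta>" "is_arrow \<beta> d j" "d i \<ge> 1" "j i \<ge> 1"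
    and "d(i := d i - 1) \<notin> \<beta>"
  shows "tstep \<beta> (d, j) (d(i := d i - 1), j(i := j i - 1))"
proof -
  have "mdvd (j(i := j i - 1)) j" unfolding mdvd_def by simp
  then have "j(i := j i - 1) \<in> \<beta>"
    using assms(1,2) unfolding basis_set_def is_arrow_def by blast
  then show ?thesis using assms unfolding tstep_def is_arrow_def by auto
qed

lemma sim0_if_head_zero:
  assumes "is_arrow \<beta> d j" "j i = 0" "d i \<ge> 1" "d(i := d i - 1) \<notin> \<beta>"
  shows "sim0 \<beta> (d, j)"
  using assms unfolding sim0_def tequiv_def by (blast intro: equivclp_refl)

lemma sim0_tequiv:
  assumes "tequiv \<beta> c c'" "sim0 \<beta> c'"
  shows "sim0 \<beta> c"
  using assms unfolding sim0_def tequiv_def by (meson equivclp_trans)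

lemma sum_fun_upd_decr_less:
  fixes d :: "('i::finite) monomial"
  assumes "d i \<ge> 1"
  shows "(\<Sum>k\<in>UNIV. (d(i := d i - 1)) k) < (\<Sum>k\<in>UNIV. d k)"
  by (rule sum_strict_mono_ex1) (use assms in auto)

lemma arrow_sim0_or_tequiv_tail:
  fixes \<beta> :: "('i::finite) monomial set"
  assumes \<beta>: "basis_set \<beta>" and b: "b \<notin> \<beta>"
  shows "mdvd b d \<Longrightarrow> is_arrow \<beta> d j \<Longrightarrow>
    sim0 \<beta> (d, j) \<or> (\<exists>j1 \<in> \<beta>. tequiv \<beta> (d, j) (b, j1))"
proof (induction "\<Sum>k\<in>UNIV. d k" arbitrary: d j rule: less_induct)
  case less
  show ?case
  proof (cases "d = b")
    case True
    then show ?thesis using less.prems unfolding is_arrow_def tequiv_def by (blast intro: equivclp_refl)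
  next
    case False
    then obtain i where i: "b i < d i"
      using less.prems(1) unfolding mdvd_def by (metis ext le_neq_trans)
    define d' where "d' = d(i := d i - 1)"
    have "mdvd b d'" using less.prems(1) i unfolding mdvd_def d'_def by auto
    then have d': "d' \<notin> \<beta>" using basis_set_notin_if_mdvd \<beta> b by blast
    show ?thesis
    proof (cases "j i = 0")
      case True
      then show ?thesis using sim0_if_head_zero less.prems(2) i d' d'_def by fastforce
    next
      case False
      define j' where "j' = j(i := j i - 1)"
      have step: "tstep \<beta> (d, j) (d', j')"
        using tstep_lower[OF \<beta> less.prems(2)] i False d' unfolding d'_def j'_def by simp
      then have arrow': "is_arrow \<beta> d' j'" unfolding tstep_def by simp
      have "(\<Sum>k\<in>UNIV. d' k) < (\<Sum>k\<in>UNIV. d k)"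
        using sum_fun_upd_decr_less[of d i] i unfolding d'_def by linarith
      then have "sim0 \<beta> (d', j') \<or> (\<exists>j1 \<in> \<beta>. tequiv \<beta> (d', j') (b, j1))"
        using less.hyps \<open>mdvd b d'\<close> arrow' by blast
      moreover have "tequiv \<beta> (d, j) (d', j')" using step unfolding tequiv_def by blast
      ultimately show ?thesis
        using sim0_tequiv unfolding tequiv_def by (meson equivclp_trans)
    qed
  qed
qed

theorem lemma4p2:
  fixes \<beta> :: "('i::finite) monomial set" and d j b :: "'i monomial"
  assumes "basis_set \<beta>"
    and "is_arrow \<beta> d j"
    and "min_gen \<beta> b"
    and "mdvd b d"
  shows "sim0 \<beta> (d, j) \<or> (\<exists>j1 \<in> \<beta>. tequiv \<beta> (d, j) (b, j1))"
  using arrow_sim0_or_tequiv_tail[OF assms(1) min_gen_notin[OF assms(1,3)] assms(4,2)] .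

end
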